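(* Let $H\in(0,1)$, $\sigma$ a real $n\times n$ matrix, $B$ an $n$-dimensional fBm with Hurst parameter $H$, and let $Z$ be the fractional Ornstein–Uhlenbeck process $dZ_t=-Z_t\,dt+\sigma\,dB_t$, $Z_0=0$. For every $\kappa>0$ there are $c,C>0$ such that $$\sup_{T\ge0}\mathbb{P}\big(\|Z\|_{\mathcal{N}_\kappa([0,T])}>|z|\big)\le Ce^{-c|z|^2}\qquad\forall\,z\in\mathbb{R}^n.$$
   Context: For $\kappa,T>0$ and $f:[0,T]\to\mathbb{R}^n$, $\|f\|_{\mathcal{N}_\kappa([0,T])}=\big(\int_0^Te^{-\kappa(T-s)}|f(s)|^2ds\big)^{1/2}$. *)

theory Defs
  imports "HOL-Probability.Probability"
begin

definition centered_gaussian :: "'a measure \<Rightarrow> ('a \<Rightarrow> real) \<Rightarrow> real \<Rightarrow> bool" where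
  "centered_gaussian M X v \<longleftrightarrow>
     X \<in> borel_measurable M \<and>
     ((v = 0 \<and> (AE \<omega> in M. X \<omega> = 0)) \<or>
      (v > 0 \<and> distributed M lborel X (\<lambda>x. ennreal (normal_density 0 (sqrt v) x))))"

definition fbm_cov :: "real \<Rightarrow> real \<Rightarrow> real \<Rightarrow> real" where
  "fbm_cov H s t = (s powr (2*H) + t powr (2*H) - \<bar>t - s\<bar> powr (2*H)) / 2"

text \<open>B is an n-dimensional fractional Brownian motion on [0,\<infinity>) with Hurst parameter H
  under the probability measure M: a centred Gaussian process (every finite linear
  combination of coordinates B_t^j is centred Gaussian) with covariance
  E[B_s^i B_t^j] = \<delta>_ij R_H(s,t), i.e. n independent one-dimensional fBms,
  with continuous sample paths.\<close>
definition is_fbm :: "'a measure \<Rightarrow> real \<Rightarrow> (real \<Rightarrow> 'a \<Rightarrow> real ^ 'n) \<Rightarrow> bool" where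
  "is_fbm M H B \<longleftrightarrow>
     prob_space M \<and>
     (\<forall>t\<ge>0. B t \<in> borel_measurable M) \<and>
     (\<forall>\<omega>\<in>space M. continuous_on {0..} (\<lambda>t. B t \<omega>)) \<and>
     (\<forall>(S::nat set) (tt::nat \<Rightarrow> real) (jj::nat \<Rightarrow> 'n) (a::nat \<Rightarrow> real).
        finite S \<longrightarrow> (\<forall>k\<in>S. tt k \<ge> 0) \<longrightarrow>
        centered_gaussian M (\<lambda>\<omega>. \<Sum>k\<in>S. a k * (B (tt k) \<omega> $ jj k))
          (\<Sum>k\<in>S. \<Sum>l\<in>S. if jj k = jj l then a k * a l * fbm_cov H (tt k) (tt l) else 0))"

definition N_norm :: "real \<Rightarrow> real \<Rightarrow> (real \<Rightarrow> real ^ 'n) \<Rightarrow> real" where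
  "N_norm \<kappa> T f = sqrt (integral {0..T} (\<lambda>s. exp (- \<kappa> * (T - s)) * (norm (f s))\<^sup>2))"

end

theory Submission
  imports Defs
begin

text \<open>Variation of constants writes \<open>Z t\<close> as
  \<open>exp (- t) \<sigma> B t + \<integral>\<^sub>0\<^sup>t exp (- (t - u)) \<sigma> (B t - B u) du\<close>. By Cauchy--Schwarz, a multiple
  of \<open>(N_norm \<kappa> T Z)\<^sup>2\<close> is therefore dominated by integrals, against exponential kernels of
  mass at most one, of \<open>exp (- 2 s) \<bar>B s\<bar>\<^sup>2\<close> and \<open>exp (- \<bar>s - u\<bar> / 2) \<bar>B s - B u\<bar>\<^sup>2\<close>. These
  are squared norms of Gaussian vectors of bounded variance, so small multiples of them have
  exponential moments bounded independently of \<open>s\<close>, \<open>u\<close> and \<open>T\<close>. Jensen's inequality for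
  \<open>exp\<close> and Fubini carry this bound through the kernel integrals, and Markov's inequality,
  applied to the resulting measurable majorant of \<open>exp (c (N_norm \<kappa> T Z)\<^sup>2)\<close>, gives the
  Gaussian tail.\<close>

section \<open>Inequalities for integrals of non-negative functions\<close>

definition ennexp :: "ennreal \<Rightarrow> ennreal" where
  "ennexp x = (if x = \<top> then \<top> else ennreal (exp (enn2real x)))"

lemma ennexp_ennreal [simp]: "0 \<le> r \<Longrightarrow> ennexp (ennreal r) = ennreal (exp r)"
  by (simp add: ennexp_def)

lemma ennexp_top [simp]: "ennexp \<top> = \<top>"
  by (simp add: ennexp_def)

lemma le_ennexp: "x \<le> ennexp x"
proof (cases x)
  case (real r)
  have "r \<le> exp r"
    using exp_ge_add_one_self[of r] by linarith
  with real show ?thesis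
    by (simp add: ennreal_leI)
qed simp

lemma ennexp_mono: "x \<le> y \<Longrightarrow> ennexp x \<le> ennexp y"
proof (cases y)
  case (real s)
  assume "x \<le> y"
  then obtain r where "x = ennreal r" "0 \<le> r" "r \<le> s"
    using real by (metis ennreal_cases ennreal_le_iff ennreal_neq_top top.extremum_uniqueI)
  then show ?thesis
    using real by (simp add: ennreal_leI)
qed simp

lemma borel_measurable_ennexp [measurable]: "ennexp \<in> borel_measurable borel"
  unfolding ennexp_def by measurable

lemma ennexp_le_add:
  assumes "2 * x \<le> a + b"
  shows "ennexp x \<le> ennexp a + ennexp b"
proof -
  have "2 * x \<le> 2 * max a b"
    using assms by (metis add_mono max.cobounded1 max.cobounded2 mult_2 order_trans)
  then have "x \<le> max a b"
    by (subst (asm) ennreal_mult_le_mult_iff) auto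
  then have "ennexp x \<le> ennexp (max a b)"
    by (rule ennexp_mono)
  also have "\<dots> \<le> ennexp a + ennexp b"
    by (simp add: max_def add_increasing add_increasing2)
  finally show ?thesis .
qed

lemma ennexp_tangent:
  assumes "0 \<le> r"
  shows "ennreal (exp r) * (y + 1) \<le> ennexp y + ennreal (exp r * r)"
proof (cases y)
  case (real t)
  have "exp r * (1 + (t - r)) \<le> exp r * exp (t - r)"
    using exp_ge_add_one_self[of "t - r"] by (intro mult_left_mono) auto
  then have "exp r * (t + 1) \<le> exp t + exp r * r"
    by (simp add: algebra_simps flip: exp_add)
  with real assms show ?thesis
    by (simp add: ennreal_leI flip: ennreal_plus ennreal_mult ennreal_1)
qed simp

lemma ennexp_nn_integral_le:
  assumes [measurable]: "q \<in> borel_measurable N" "f \<in> borel_measurable N"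
    and mass: "(\<integral>\<^sup>+x. ennreal (q x) \<partial>N) \<le> 1"
  shows "ennexp (\<integral>\<^sup>+x. ennreal (q x) * f x \<partial>N)
      \<le> ennreal (exp 1) + (\<integral>\<^sup>+x. ennreal (q x) * ennexp (f x) \<partial>N)"
proof -
  define F where "F = (\<integral>\<^sup>+x. ennreal (q x) * f x \<partial>N)"
  define I where "I = (\<integral>\<^sup>+x. ennreal (q x) * ennexp (f x) \<partial>N)"
  define m where "m = (\<integral>\<^sup>+x. ennreal (q x) \<partial>N)"
  have "F \<le> I"
    unfolding F_def I_def by (intro nn_integral_mono mult_left_mono le_ennexp) auto
  have large: "ennexp F \<le> I" if F: "F = ennreal r" and r: "1 < r" for r
  proof -
    have "ennreal (exp r) * F + ennreal (exp r) * m
        = (\<integral>\<^sup>+x. ennreal (exp r) * (ennreal (q x) * f x) + ennreal (exp r) * ennreal (q x) \<partial>N)"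
      unfolding F_def m_def by (simp add: nn_integral_add nn_integral_cmult)
    also have "\<dots> \<le> (\<integral>\<^sup>+x. ennreal (q x) * ennexp (f x) + ennreal (exp r * r) * ennreal (q x) \<partial>N)"
    proof (rule nn_integral_mono)
      fix x
      have "ennreal (q x) * (ennreal (exp r) * (f x + 1))
          \<le> ennreal (q x) * (ennexp (f x) + ennreal (exp r * r))"
        using r by (intro mult_left_mono ennexp_tangent) auto
      then show "ennreal (exp r) * (ennreal (q x) * f x) + ennreal (exp r) * ennreal (q x)
          \<le> ennreal (q x) * ennexp (f x) + ennreal (exp r * r) * ennreal (q x)"
        by (simp add: distrib_left mult_ac)
    qed
    also have "\<dots> = I + ennreal (exp r * r) * m"
      unfolding I_def m_def by (simp add: nn_integral_add nn_integral_cmult)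
    finally have "ennreal (exp r) * F + ennreal (exp r) * m \<le> I + ennreal (exp r * r) * m" .
    moreover obtain \<mu> where \<mu>: "m = ennreal \<mu>" "0 \<le> \<mu>" "\<mu> \<le> 1"
      using mass unfolding m_def[symmetric]
      by (metis ennreal_cases ennreal_le_1 ennreal_one_neq_top top.extremum_uniqueI)
    \<comment> \<open>\<open>exp r * (r + m) \<le> I + exp r * r * m\<close> and \<open>(r - 1) * (1 - m) \<ge> 0\<close> give \<open>exp r \<le> I\<close>\<close>
    ultimately have "I \<noteq> \<top> \<Longrightarrow> exp r \<le> enn2real I"
      using F r mult_nonneg_nonneg[of "exp r * (r - 1)" "1 - \<mu>"]
      by (cases I) (auto simp: algebra_simps simp flip: ennreal_mult ennreal_plus)
    then show ?thesis
      using F r by (cases I) (auto simp: ennreal_leI)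
  qed
  have small: "ennexp F \<le> ennreal (exp 1)" if "F = ennreal r" "0 \<le> r" "r \<le> 1" for r
    using that by (simp add: ennreal_leI)
  have "ennexp F \<le> ennreal (exp 1) + I"
  proof (cases F)
    case (real r)
    with large small show ?thesis
      by (cases "r \<le> 1") (auto intro: add_increasing add_increasing2)
  next
    case top
    with \<open>F \<le> I\<close> show ?thesis
      by (simp add: top_unique)
  qed
  then show ?thesis
    unfolding F_def I_def .
qed

lemma nn_integral_ennexp_nn_integral_le:
  fixes f :: "'b \<Rightarrow> 'a \<Rightarrow> ennreal"
  assumes "prob_space M" "sigma_finite_measure N"
    and [measurable]: "q \<in> borel_measurable N"
    and mass: "(\<integral>\<^sup>+x. ennreal (q x) \<partial>N) \<le> 1"
    and [measurable]: "(\<lambda>p. f (fst p) (snd p)) \<in> borel_measurable (N \<Otimes>\<^sub>M M)"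
    and moment: "\<And>x. (\<integral>\<^sup>+\<omega>. ennexp (f x \<omega>) \<partial>M) \<le> C"
  shows "(\<integral>\<^sup>+\<omega>. ennexp (\<integral>\<^sup>+x. ennreal (q x) * f x \<omega> \<partial>N) \<partial>M) \<le> ennreal (exp 1) + C"
proof -
  interpret prob_space M by fact
  interpret N: sigma_finite_measure N by fact
  interpret pair_sigma_finite N M ..
  have [measurable]: "(\<lambda>p. f (snd p) (fst p)) \<in> borel_measurable (M \<Otimes>\<^sub>M N)"
    using measurable_pair_swap[of "\<lambda>p. f (fst p) (snd p)"] by (simp add: case_prod_beta')
  have [measurable]: "(\<lambda>x. f x \<omega>) \<in> borel_measurable N" if "\<omega> \<in> space M" for \<omega>
    using measurable_Pair1[of "\<lambda>p. f (fst p) (snd p)", OF _ that] by simp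
  have [measurable]: "f x \<in> borel_measurable M" if "x \<in> space N" for x
    using measurable_Pair2[of "\<lambda>p. f (fst p) (snd p)", OF _ that] by simp
  have "(\<integral>\<^sup>+\<omega>. ennexp (\<integral>\<^sup>+x. ennreal (q x) * f x \<omega> \<partial>N) \<partial>M)
      \<le> (\<integral>\<^sup>+\<omega>. ennreal (exp 1) + (\<integral>\<^sup>+x. ennreal (q x) * ennexp (f x \<omega>) \<partial>N) \<partial>M)"
    by (intro nn_integral_mono ennexp_nn_integral_le mass) simp_all
  also have "\<dots> = ennreal (exp 1) + (\<integral>\<^sup>+x. (\<integral>\<^sup>+\<omega>. ennreal (q x) * ennexp (f x \<omega>) \<partial>M) \<partial>N)"
    by (simp add: nn_integral_add emeasure_space_1 Fubini')
  also have "\<dots> = ennreal (exp 1) + (\<integral>\<^sup>+x. ennreal (q x) * (\<integral>\<^sup>+\<omega>. ennexp (f x \<omega>) \<partial>M) \<partial>N)"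
    by (intro arg_cong2[where f="(+)"] nn_integral_cong nn_integral_cmult) simp_all
  also have "\<dots> \<le> ennreal (exp 1) + (\<integral>\<^sup>+x. ennreal (q x) * C \<partial>N)"
    by (intro add_left_mono nn_integral_mono mult_left_mono moment) simp
  also have "\<dots> \<le> ennreal (exp 1) + C"
    using mult_right_mono[OF mass, of C] by (simp add: nn_integral_multc)
  finally show ?thesis .
qed

lemma nn_integral_weighted_square_le:
  assumes [measurable]: "q \<in> borel_measurable N" "h \<in> borel_measurable N"
    and mass: "(\<integral>\<^sup>+x. ennreal (q x) \<partial>N) \<le> 1"
  shows "(\<integral>\<^sup>+x. ennreal (q x) * h x \<partial>N)\<^sup>2 \<le> (\<integral>\<^sup>+x. ennreal (q x) * (h x)\<^sup>2 \<partial>N)"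
proof -
  have sq: "(ennreal (sqrt (q x)))\<^sup>2 = ennreal (q x)" for x
    by (cases "0 \<le> q x") (simp_all add: ennreal_power ennreal_neg)
  have "(\<integral>\<^sup>+x. ennreal (q x) * h x \<partial>N)
      = (\<integral>\<^sup>+x. ennreal (sqrt (q x)) * (ennreal (sqrt (q x)) * h x) \<partial>N)"
    by (simp add: mult.assoc[symmetric] power2_eq_square[symmetric] sq)
  also have "\<dots>\<^sup>2 \<le> (\<integral>\<^sup>+x. (ennreal (sqrt (q x)))\<^sup>2 \<partial>N)
      * (\<integral>\<^sup>+x. (ennreal (sqrt (q x)) * h x)\<^sup>2 \<partial>N)"
    by (rule Cauchy_Schwarz_nn_integral) measurable
  also have "\<dots> = (\<integral>\<^sup>+x. ennreal (q x) \<partial>N) * (\<integral>\<^sup>+x. ennreal (q x) * (h x)\<^sup>2 \<partial>N)"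
    by (simp add: sq power_mult_distrib)
  also have "\<dots> \<le> 1 * (\<integral>\<^sup>+x. ennreal (q x) * (h x)\<^sup>2 \<partial>N)"
    by (rule mult_right_mono[OF mass]) simp
  finally show ?thesis
    by simp
qed

text \<open>\<open>S\<close> need not be measurable: the solution \<open>Z\<close> of the integral equation is not
  assumed to be a measurable process.\<close>

lemma nn_integral_Markov_inequality_measure:
  assumes "finite_measure M" and [measurable]: "Y \<in> borel_measurable M"
    and "(\<integral>\<^sup>+\<omega>. Y \<omega> \<partial>M) \<le> ennreal C" "0 \<le> C" "0 < a"
    and "\<And>\<omega>. \<omega> \<in> S \<Longrightarrow> ennreal a \<le> Y \<omega>"
  shows "measure M S \<le> C / a"
proof (cases "S \<in> sets M")
  case True
  have "ennreal a * emeasure M S = (\<integral>\<^sup>+\<omega>. ennreal a * indicator S \<omega> \<partial>M)"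
    using True by (simp add: nn_integral_cmult_indicator)
  also have "\<dots> \<le> (\<integral>\<^sup>+\<omega>. Y \<omega> \<partial>M)"
    using assms(6) by (intro nn_integral_mono) (simp add: indicator_def)
  also have "\<dots> \<le> ennreal C"
    by fact
  finally have "a * measure M S \<le> C"
    using assms(1,4,5) by (simp add: finite_measure.emeasure_eq_measure ennreal_mult'[symmetric])
  then show ?thesis
    using assms(5) by (simp add: field_simps)
next
  case False
  then show ?thesis
    using assms by (simp add: measure_notin_sets)
qed

section \<open>Exponential moments of Gaussian vectors\<close>

lemma centered_gaussian_nn_integral_exp_square:
  assumes "prob_space M" "centered_gaussian M X v" "2 * c * v < 1"
  shows "(\<integral>\<^sup>+\<omega>. ennreal (exp (c * (X \<omega>)\<^sup>2)) \<partial>M) = ennreal (1 / sqrt (1 - 2 * c * v))"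
proof -
  interpret prob_space M by fact
  consider "v = 0" "AE \<omega> in M. X \<omega> = 0"
    | "0 < v" "distributed M lborel X (\<lambda>x. ennreal (normal_density 0 (sqrt v) x))"
    using assms(2) unfolding centered_gaussian_def by blast
  then show ?thesis
  proof cases
    case 1
    then have "(\<integral>\<^sup>+\<omega>. ennreal (exp (c * (X \<omega>)\<^sup>2)) \<partial>M) = (\<integral>\<^sup>+\<omega>. 1 \<partial>M)"
      by (intro nn_integral_cong_AE) auto
    with 1 show ?thesis
      by (simp add: emeasure_space_1)
  next
    case 2
    define a where "a = 1 - 2 * c * v"
    have a: "0 < a"
      using assms(3) unfolding a_def by simp
    have density: "normal_density 0 (sqrt v) x * exp (c * x\<^sup>2)
        = 1 / sqrt a * normal_density 0 (sqrt (v / a)) x" for x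
    proof -
      have "exp (- x\<^sup>2 / (2 * v)) * exp (c * x\<^sup>2) = exp (- x\<^sup>2 / (2 * (v / a)))"
        using 2(1) a by (simp add: a_def field_simps flip: exp_add)
      moreover have "1 / sqrt (2 * pi * v) = 1 / sqrt a * (1 / sqrt (2 * pi * (v / a)))"
        using 2(1) a by (simp add: real_sqrt_divide real_sqrt_mult field_simps)
      ultimately show ?thesis
        using 2(1) a by (simp add: normal_density_def)
    qed
    have "(\<integral>\<^sup>+\<omega>. ennreal (exp (c * (X \<omega>)\<^sup>2)) \<partial>M)
        = (\<integral>\<^sup>+x. ennreal (normal_density 0 (sqrt v) x) * ennreal (exp (c * x\<^sup>2)) \<partial>lborel)"
      by (rule distributed_nn_integral[OF 2(2), symmetric]) simp
    also have "\<dots> = (\<integral>\<^sup>+x. ennreal (1 / sqrt a) * ennreal (normal_density 0 (sqrt (v / a)) x) \<partial>lborel)"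
      using a by (intro nn_integral_cong) (simp add: density flip: ennreal_mult)
    also have "\<dots> = ennreal (1 / sqrt a) * (\<integral>\<^sup>+x. ennreal (normal_density 0 (sqrt (v / a)) x) \<partial>lborel)"
      by (rule nn_integral_cmult) simp
    also have "(\<integral>\<^sup>+x. ennreal (normal_density 0 (sqrt (v / a)) x) \<partial>lborel) = 1"
    proof -
      interpret N: prob_space "density lborel (normal_density 0 (sqrt (v / a)))"
        using 2(1) a by (intro prob_space_normal_density) simp
      show ?thesis
        using N.emeasure_space_1 by (simp add: emeasure_density)
    qed
    finally show ?thesis
      by (simp add: a_def)
  qed
qed

lemma exp_norm_square_le_sum:
  fixes x :: "real ^ 'n" and c :: real
  assumes "0 \<le> c"
  shows "exp (c * (norm x)\<^sup>2) \<le> (\<Sum>j\<in>UNIV. exp (CARD('n) * c * (x $ j)\<^sup>2))"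
proof -
  obtain j0 where j0: "\<And>j. (x $ j)\<^sup>2 \<le> (x $ j0)\<^sup>2"
  proof -
    have "(MAX j. (x $ j)\<^sup>2) \<in> range (\<lambda>j. (x $ j)\<^sup>2)"
      by (intro Max_in) auto
    then obtain j0 where "(MAX j. (x $ j)\<^sup>2) = (x $ j0)\<^sup>2"
      by blast
    moreover have "(x $ j)\<^sup>2 \<le> (MAX j. (x $ j)\<^sup>2)" for j
      by (rule Max_ge) auto
    ultimately show ?thesis
      using that by metis
  qed
  have "(norm x)\<^sup>2 = (\<Sum>j\<in>UNIV. (x $ j)\<^sup>2)"
    by (simp add: norm_vec_def L2_set_def sum_nonneg)
  also have "\<dots> \<le> CARD('n) * (x $ j0)\<^sup>2"
    using sum_mono[of UNIV "\<lambda>j. (x $ j)\<^sup>2" "\<lambda>_. (x $ j0)\<^sup>2"] j0 by simp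
  finally have "exp (c * (norm x)\<^sup>2) \<le> exp (CARD('n) * c * (x $ j0)\<^sup>2)"
    using assms by (simp add: mult_left_mono mult.assoc mult.left_commute)
  also have "\<dots> \<le> (\<Sum>j\<in>UNIV. exp (CARD('n) * c * (x $ j)\<^sup>2))"
    by (rule member_le_sum) auto
  finally show ?thesis .
qed

lemma gaussian_vector_nn_integral_exp_square_le:
  fixes Y :: "'a \<Rightarrow> real ^ 'n" and v :: "'n \<Rightarrow> real" and c :: real
  assumes "prob_space M" "\<And>j. centered_gaussian M (\<lambda>\<omega>. Y \<omega> $ j) (v j)"
    and "0 \<le> c" "\<And>j. 4 * CARD('n) * c * v j \<le> 1"
  shows "(\<integral>\<^sup>+\<omega>. ennreal (exp (c * (norm (Y \<omega>))\<^sup>2)) \<partial>M) \<le> ennreal (2 * CARD('n))"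
proof -
  have [measurable]: "(\<lambda>\<omega>. Y \<omega> $ j) \<in> borel_measurable M" for j
    using assms(2) unfolding centered_gaussian_def by blast
  have coordinate: "(\<integral>\<^sup>+\<omega>. ennreal (exp (CARD('n) * c * (Y \<omega> $ j)\<^sup>2)) \<partial>M) \<le> 2" for j
  proof -
    have "1 / 2 \<le> 1 - 2 * (CARD('n) * c) * v j"
      using assms(4)[of j] by simp
    then have "1 / sqrt (1 - 2 * (CARD('n) * c) * v j) \<le> 2"
      using real_sqrt_le_mono[of "1/4" "1 - 2 * (CARD('n) * c) * v j"]
      by (simp add: real_sqrt_divide divide_le_eq)
    moreover have "2 * (CARD('n) * c) * v j < 1"
      using assms(4)[of j] by simp
    ultimately show ?thesis
      using centered_gaussian_nn_integral_exp_square[OF assms(1,2)]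
      by (metis ennreal_leI ennreal_numeral)
  qed
  have "(\<integral>\<^sup>+\<omega>. ennreal (exp (c * (norm (Y \<omega>))\<^sup>2)) \<partial>M)
      \<le> (\<integral>\<^sup>+\<omega>. (\<Sum>j\<in>UNIV. ennreal (exp (CARD('n) * c * (Y \<omega> $ j)\<^sup>2))) \<partial>M)"
  proof (rule nn_integral_mono)
    fix \<omega>
    show "ennreal (exp (c * (norm (Y \<omega>))\<^sup>2))
        \<le> (\<Sum>j\<in>UNIV. ennreal (exp (CARD('n) * c * (Y \<omega> $ j)\<^sup>2)))"
      using exp_norm_square_le_sum[OF assms(3), of "Y \<omega>"] by (simp add: ennreal_leI)
  qed
  also have "\<dots> = (\<Sum>j\<in>UNIV. (\<integral>\<^sup>+\<omega>. ennreal (exp (CARD('n) * c * (Y \<omega> $ j)\<^sup>2)) \<partial>M))"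
    by (rule nn_integral_sum) measurable
  also have "\<dots> \<le> (\<Sum>j\<in>(UNIV :: 'n set). 2)"
    by (rule sum_mono) (rule coordinate)
  finally show ?thesis
    by (simp add: ennreal_of_nat_eq_real_of_nat ennreal_mult mult.commute)
qed

lemma gaussian_vector_nn_integral_ennexp_le:
  fixes Y :: "'a \<Rightarrow> real ^ 'n" and a w v :: real
  assumes "prob_space M" "\<And>j. centered_gaussian M (\<lambda>\<omega>. Y \<omega> $ j) v"
    and "0 \<le> a" "32 * CARD('n) * a \<le> 1" "0 \<le> w" "w * v \<le> 8"
  shows "(\<integral>\<^sup>+\<omega>. ennexp (ennreal (a * w * (norm (Y \<omega>))\<^sup>2)) \<partial>M) \<le> ennreal (2 * CARD('n))"
proof -
  have "4 * CARD('n) * a * (w * v) \<le> 4 * CARD('n) * a * 8"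
    using assms(3,6) by (intro mult_left_mono) simp_all
  also have "\<dots> \<le> 1"
    using assms(4) by simp
  finally have "4 * CARD('n) * (a * w) * v \<le> 1"
    by (simp only: mult.assoc)
  then have "(\<integral>\<^sup>+\<omega>. ennreal (exp (a * w * (norm (Y \<omega>))\<^sup>2)) \<partial>M) \<le> ennreal (2 * CARD('n))"
    using assms(3,5) by (intro gaussian_vector_nn_integral_exp_square_le[OF assms(1,2)]) simp_all
  with assms(3,5) show ?thesis
    by simp
qed

section \<open>Fractional Brownian motion\<close>

lemma is_fbmD:
  assumes "is_fbm M H B"
  shows "prob_space M" and "\<And>t. 0 \<le> t \<Longrightarrow> B t \<in> borel_measurable M"
    and "\<And>\<omega>. \<omega> \<in> space M \<Longrightarrow> continuous_on {0..} (\<lambda>t. B t \<omega>)"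
  using assms unfolding is_fbm_def by blast+

lemma is_fbm_continuous_on_max:
  assumes "is_fbm M H B" "\<omega> \<in> space M"
  shows "continuous_on UNIV (\<lambda>t. B (max 0 t) \<omega>)"
  by (rule continuous_on_compose2[OF is_fbmD(3)[OF assms]]) (auto intro: continuous_on_max)

lemma is_fbm_gaussian_combination:
  fixes B :: "real \<Rightarrow> 'a \<Rightarrow> real ^ 'n" and S :: "nat set"
    and tt a :: "nat \<Rightarrow> real" and jj :: "nat \<Rightarrow> 'n"
  assumes "is_fbm M H B" "finite S" "\<And>k. k \<in> S \<Longrightarrow> 0 \<le> tt k"
  shows "centered_gaussian M (\<lambda>\<omega>. \<Sum>k\<in>S. a k * (B (tt k) \<omega> $ jj k))
           (\<Sum>k\<in>S. \<Sum>l\<in>S. if jj k = jj l then a k * a l * fbm_cov H (tt k) (tt l) else 0)"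
proof -
  have combination: "\<forall>(S :: nat set) (tt :: nat \<Rightarrow> real) (jj :: nat \<Rightarrow> 'n) (a :: nat \<Rightarrow> real).
      finite S \<longrightarrow> (\<forall>k\<in>S. 0 \<le> tt k) \<longrightarrow>
      centered_gaussian M (\<lambda>\<omega>. \<Sum>k\<in>S. a k * (B (tt k) \<omega> $ jj k))
        (\<Sum>k\<in>S. \<Sum>l\<in>S. if jj k = jj l then a k * a l * fbm_cov H (tt k) (tt l) else 0)"
    using assms(1) unfolding is_fbm_def by (elim conjE) assumption
  show ?thesis
    by (rule combination[rule_format, OF assms(2,3)])
qed

lemma is_fbm_coordinate_gaussian:
  assumes "is_fbm M H B" "0 \<le> t"
  shows "centered_gaussian M (\<lambda>\<omega>. B t \<omega> $ j) (t powr (2 * H))"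
  using is_fbm_gaussian_combination[OF assms(1), of "{0}" "\<lambda>_. t" "\<lambda>_. 1" "\<lambda>_. j"] assms(2)
  by (simp add: fbm_cov_def)

lemma is_fbm_increment_gaussian:
  assumes "is_fbm M H B" "0 \<le> s" "0 \<le> u"
  shows "centered_gaussian M (\<lambda>\<omega>. B s \<omega> $ j - B u \<omega> $ j) (\<bar>s - u\<bar> powr (2 * H))"
proof -
  define tt :: "nat \<Rightarrow> real" where "tt k = (if k = 0 then s else u)" for k
  define a :: "nat \<Rightarrow> real" where "a k = (if k = 0 then 1 else -1)" for k
  have "centered_gaussian M (\<lambda>\<omega>. \<Sum>k\<in>{0, 1}. a k * (B (tt k) \<omega> $ j))
      (\<Sum>k\<in>{0, 1}. \<Sum>l\<in>{0, 1}. a k * a l * fbm_cov H (tt k) (tt l))"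
    using is_fbm_gaussian_combination[OF assms(1), of "{0, 1}" tt a "\<lambda>_. j"] assms(2,3)
    by (simp add: tt_def)
  then show ?thesis
    by (simp add: a_def tt_def fbm_cov_def abs_minus_commute field_simps)
qed

lemma floor_multiple_divide_LIMSEQ:
  "(\<lambda>k. of_int \<lfloor>x * real (Suc k)\<rfloor> / real (Suc k)) \<longlonglongrightarrow> (x :: real)"
proof (rule tendsto_sandwich[where f = "\<lambda>k. x - 1 / real (Suc k)" and h = "\<lambda>k. x"])
  have "(\<lambda>k. 1 / real (Suc k)) \<longlonglongrightarrow> 0"
    by (rule LIMSEQ_Suc[OF lim_const_over_n])
  then show "(\<lambda>k. x - 1 / real (Suc k)) \<longlonglongrightarrow> x"
    using tendsto_diff[OF tendsto_const[of x]] by fastforce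
  show "\<forall>\<^sub>F k in sequentially. x - 1 / real (Suc k) \<le> of_int \<lfloor>x * real (Suc k)\<rfloor> / real (Suc k)"
  proof (intro always_eventually allI)
    fix k
    have "x * real (Suc k) - 1 \<le> of_int \<lfloor>x * real (Suc k)\<rfloor>"
      by linarith
    then have "(x * real (Suc k) - 1) / real (Suc k) \<le> of_int \<lfloor>x * real (Suc k)\<rfloor> / real (Suc k)"
      by (rule divide_right_mono) simp
    then show "x - 1 / real (Suc k) \<le> of_int \<lfloor>x * real (Suc k)\<rfloor> / real (Suc k)"
      by (simp add: diff_divide_distrib)
  qed
  show "\<forall>\<^sub>F k in sequentially. of_int \<lfloor>x * real (Suc k)\<rfloor> / real (Suc k) \<le> x"
    by (intro always_eventually allI) (simp add: field_simps)
qed simp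

text \<open>A process with continuous paths is jointly measurable: it is the pointwise limit of
  the processes sampled on the grids \<open>\<int> / (k + 1)\<close>.\<close>

lemma borel_measurable_continuous_process:
  fixes f :: "real \<Rightarrow> 'a \<Rightarrow> 'b :: metric_space"
  assumes meas: "\<And>t. f t \<in> borel_measurable M"
    and cont: "\<And>\<omega>. \<omega> \<in> space M \<Longrightarrow> continuous_on UNIV (\<lambda>t. f t \<omega>)"
  shows "(\<lambda>p. f (fst p) (snd p)) \<in> borel_measurable (lborel \<Otimes>\<^sub>M M)"
proof (rule borel_measurable_LIMSEQ_metric)
  fix k
  have sample: "(\<lambda>p. f (of_int i / real (Suc k)) (snd p)) \<in> borel_measurable (lborel \<Otimes>\<^sub>M M)"
    for i :: int
    by (rule measurable_compose[OF measurable_snd meas])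
  have grid: "(\<lambda>p. \<lfloor>fst p * real (Suc k)\<rfloor>) \<in> measurable (lborel \<Otimes>\<^sub>M M) (count_space UNIV)"
  proof (subst measurable_count_space_eq2_countable, safe)
    fix i :: int
    have "(\<lambda>p. \<lfloor>fst p * real (Suc k)\<rfloor>) -` {i} \<inter> space (lborel \<Otimes>\<^sub>M M)
        = {p \<in> space (lborel \<Otimes>\<^sub>M M). of_int i \<le> fst p * real (Suc k) \<and> fst p * real (Suc k) < of_int i + 1}"
      by (auto simp: floor_eq_iff)
    also have "\<dots> \<in> sets (lborel \<Otimes>\<^sub>M M)"
      by measurable
    finally show "(\<lambda>p. \<lfloor>fst p * real (Suc k)\<rfloor>) -` {i} \<inter> space (lborel \<Otimes>\<^sub>M M) \<in> sets (lborel \<Otimes>\<^sub>M M)" .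
  qed simp
  show "(\<lambda>p. f (of_int \<lfloor>fst p * real (Suc k)\<rfloor> / real (Suc k)) (snd p)) \<in> borel_measurable (lborel \<Otimes>\<^sub>M M)"
    by (rule measurable_compose_countable'[OF sample grid]) simp
next
  fix p :: "real \<times> 'a"
  assume "p \<in> space (lborel \<Otimes>\<^sub>M M)"
  then have "isCont (\<lambda>t. f t (snd p)) (fst p)"
    using cont by (simp add: space_pair_measure continuous_on_eq_continuous_at mem_Times_iff)
  then show "(\<lambda>k. f (of_int \<lfloor>fst p * real (Suc k)\<rfloor> / real (Suc k)) (snd p)) \<longlonglongrightarrow> f (fst p) (snd p)"
    by (rule isCont_tendsto_compose) (rule floor_multiple_divide_LIMSEQ)
qed

lemma is_fbm_measurable_pair:
  assumes "is_fbm M H B"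
  shows "(\<lambda>p. B (max 0 (fst p)) (snd p)) \<in> borel_measurable (lborel \<Otimes>\<^sub>M M)"
  using is_fbmD(2)[OF assms] is_fbm_continuous_on_max[OF assms]
  by (intro borel_measurable_continuous_process[where f = "\<lambda>t. B (max 0 t)"]) simp_all

lemma is_fbm_measurable_compose:
  assumes "is_fbm M H B" "t \<in> borel_measurable N" "w \<in> measurable N M"
  shows "(\<lambda>x. B (max 0 (t x)) (w x)) \<in> borel_measurable N"
proof -
  have "t \<in> measurable N lborel"
    using assms(2) by simp
  from measurable_compose[OF measurable_Pair[OF this assms(3)] is_fbm_measurable_pair[OF assms(1)]]
  show ?thesis
    by simp
qed

lemma powr_le_exp_half:
  fixes x H :: real
  assumes "0 \<le> x" "0 < H" "H < 1"
  shows "x powr (2 * H) \<le> 8 * exp (x / 2)"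
proof -
  have "x powr (2 * H) \<le> 1 + x\<^sup>2"
  proof (cases "x \<le> 1")
    case True
    then have "x powr (2 * H) \<le> 1"
      using assms by (intro powr_le1) auto
    then show ?thesis
      using zero_le_power2[of x] by linarith
  next
    case False
    then have "x powr (2 * H) \<le> x powr 2"
      using assms by (intro powr_mono) auto
    with False show ?thesis
      by simp
  qed
  also have "\<dots> \<le> 8 * exp (x / 2)"
    using exp_lower_Taylor_quadratic[of "x / 2"] assms(1) by (simp add: power_divide)
  finally show ?thesis .
qed

lemma exp_mult_powr_le:
  fixes x y H :: real
  assumes "0 \<le> y" "y \<le> x" "0 < H" "H < 1"
  shows "exp (- x / 2) * y powr (2 * H) \<le> 8"
proof -
  have "exp (y / 2) \<le> exp (x / 2)"
    using assms(2) by simp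
  then have "y powr (2 * H) \<le> 8 * exp (x / 2)"
    using powr_le_exp_half[OF assms(1,3,4)] by linarith
  then have "exp (- x / 2) * y powr (2 * H) \<le> exp (- x / 2) * (8 * exp (x / 2))"
    by (intro mult_left_mono) auto
  also have "\<dots> = 8"
    by (simp flip: exp_add)
  finally show ?thesis .
qed

lemma fbm_nn_integral_exp_square_le:
  fixes B :: "real \<Rightarrow> 'a \<Rightarrow> real ^ 'n" and a s :: real
  assumes "is_fbm M H B" "0 < H" "H < 1" "0 \<le> a" "32 * CARD('n) * a \<le> 1"
  shows "(\<integral>\<^sup>+\<omega>. ennexp (ennreal (a * exp (- 2 * s) * (norm (B (max 0 s) \<omega>))\<^sup>2)) \<partial>M)
      \<le> ennreal (2 * CARD('n))"
proof -
  have "exp (- 2 * s) * max 0 s powr (2 * H) \<le> 8"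
  proof (cases "0 \<le> s")
    case True
    have "exp (- 2 * s) * s powr (2 * H) \<le> exp (- s / 2) * s powr (2 * H)"
      using True by (intro mult_right_mono) auto
    also have "\<dots> \<le> 8"
      using True assms(2,3) by (intro exp_mult_powr_le) auto
    finally show ?thesis
      using True by simp
  qed simp
  then show ?thesis
    using is_fbm_coordinate_gaussian[OF assms(1), of "max 0 s"] assms(4,5)
    by (intro gaussian_vector_nn_integral_ennexp_le[OF is_fbmD(1)[OF assms(1)]]) simp_all
qed

lemma fbm_increment_nn_integral_exp_square_le:
  fixes B :: "real \<Rightarrow> 'a \<Rightarrow> real ^ 'n" and a s u :: real
  assumes "is_fbm M H B" "0 < H" "H < 1" "0 \<le> a" "32 * CARD('n) * a \<le> 1"
  shows "(\<integral>\<^sup>+\<omega>. ennexp (ennreal (a * exp (- \<bar>s - u\<bar> / 2)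
        * (norm (B (max 0 s) \<omega> - B (max 0 u) \<omega>))\<^sup>2)) \<partial>M) \<le> ennreal (2 * CARD('n))"
proof -
  have "exp (- \<bar>s - u\<bar> / 2) * \<bar>max 0 s - max 0 u\<bar> powr (2 * H) \<le> 8"
    using assms(2,3) by (intro exp_mult_powr_le) auto
  then show ?thesis
    using is_fbm_increment_gaussian[OF assms(1), of "max 0 s" "max 0 u"] assms(4,5)
    by (intro gaussian_vector_nn_integral_ennexp_le[OF is_fbmD(1)[OF assms(1)]]) simp_all
qed

section \<open>The integral equation pathwise\<close>

definition exp_kernel :: "real \<Rightarrow> real \<Rightarrow> real \<Rightarrow> real \<Rightarrow> real" where
  "exp_kernel k a b u = indicator {a..b} u * (k * exp (- k * (b - u)))"

lemma exp_kernel_nonneg: "0 \<le> k \<Longrightarrow> 0 \<le> exp_kernel k a b u"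
  by (simp add: exp_kernel_def)

lemma borel_measurable_exp_kernel [measurable]: "exp_kernel k a b \<in> borel_measurable borel"
  unfolding exp_kernel_def by measurable

lemma measurable_exp_kernel [measurable (raw)]:
  assumes [measurable]: "a \<in> borel_measurable M" "b \<in> borel_measurable M" "u \<in> borel_measurable M"
  shows "(\<lambda>x. exp_kernel k (a x) (b x) (u x)) \<in> borel_measurable M"
  unfolding exp_kernel_def indicator_def atLeastAtMost_iff by measurable

lemma has_integral_exp_kernel:
  fixes k a b :: real
  assumes "a \<le> b"
  shows "((\<lambda>u. k * exp (- k * (b - u))) has_integral (1 - exp (- k * (b - a)))) {a..b}"
proof -
  have "((\<lambda>u. exp (- k * (b - u))) has_vector_derivative k * exp (- k * (b - u))) (at u within {a..b})" for u
    by (auto intro!: derivative_eq_intros simp: has_real_derivative_iff_has_vector_derivative[symmetric])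
  from fundamental_theorem_of_calculus[OF assms this] show ?thesis
    by simp
qed

lemma nn_integral_exp_kernel_le_1:
  assumes "0 \<le> k"
  shows "(\<integral>\<^sup>+u. ennreal (exp_kernel k a b u) \<partial>lborel) \<le> 1"
proof (cases "a \<le> b")
  case True
  have "(\<integral>\<^sup>+u. ennreal (exp_kernel k a b u) \<partial>lborel) = ennreal (1 - exp (- k * (b - a)))"
    unfolding exp_kernel_def using assms
    by (intro nn_integral_has_integral_lebesgue has_integral_exp_kernel True) simp
  then show ?thesis
    using assms True by simp
qed (simp add: exp_kernel_def)

lemma integral_equation_primitive:
  fixes z b :: "real \<Rightarrow> 'v :: euclidean_space"
  assumes z: "continuous_on {0..} z" and b: "continuous_on {0..} b"
    and eq: "\<And>t. 0 \<le> t \<Longrightarrow> z t = b t - integral {0..t} z" and t: "0 \<le> t"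
  shows "integral {0..t} z = integral {0..t} (\<lambda>u. exp (- (t - u)) *\<^sub>R b u)"
proof -
  have zt: "continuous_on {0..t} z"
    using continuous_on_subset[OF z] by auto
  have bt: "continuous_on {0..t} (\<lambda>u. exp u *\<^sub>R b u)"
    using continuous_on_subset[OF b] by (intro continuous_intros) auto
  define \<Phi> where "\<Phi> = (\<lambda>s. exp s *\<^sub>R integral {0..s} z - integral {0..s} (\<lambda>u. exp u *\<^sub>R b u))"
  have deriv: "(\<Phi> has_vector_derivative 0) (at s within {0..t})" if s: "s \<in> {0..t}" for s
  proof -
    have "(\<Phi> has_vector_derivative
        (exp s *\<^sub>R z s + exp s *\<^sub>R integral {0..s} z) - exp s *\<^sub>R b s) (at s within {0..t})"
      unfolding \<Phi>_def
      by (intro has_vector_derivative_diff has_vector_derivative_scaleR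
          integral_has_vector_derivative[OF zt s] integral_has_vector_derivative[OF bt s])
        (auto intro!: derivative_eq_intros)
    moreover have "z s + integral {0..s} z - b s = 0"
      using eq[of s] s by simp
    then have "(exp s *\<^sub>R z s + exp s *\<^sub>R integral {0..s} z) - exp s *\<^sub>R b s = 0"
      by (metis scaleR_add_right scaleR_diff_right scaleR_zero_right)
    ultimately show ?thesis
      by simp
  qed
  obtain C where "\<And>s. s \<in> {0..t} \<Longrightarrow> \<Phi> s = C"
    using has_vector_derivative_zero_constant[OF convex_real_interval(5) deriv] by blast
  then have "\<Phi> t = \<Phi> 0"
    using t by simp
  then have "exp t *\<^sub>R integral {0..t} z = integral {0..t} (\<lambda>u. exp u *\<^sub>R b u)"
    by (simp add: \<Phi>_def)
  have "integral {0..t} z = exp (- t) *\<^sub>R (exp t *\<^sub>R integral {0..t} z)"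
    by (simp flip: exp_add)
  also have "\<dots> = exp (- t) *\<^sub>R integral {0..t} (\<lambda>u. exp u *\<^sub>R b u)"
    by (simp only: \<open>exp t *\<^sub>R integral {0..t} z = _\<close>)
  also have "\<dots> = integral {0..t} (\<lambda>u. exp (- (t - u)) *\<^sub>R b u)"
    by (simp flip: integral_cmul exp_add)
  finally show ?thesis .
qed

lemma integral_equation_solution:
  fixes z b :: "real \<Rightarrow> 'v :: euclidean_space"
  assumes z: "continuous_on {0..} z" and b: "continuous_on {0..} b"
    and eq: "\<And>t. 0 \<le> t \<Longrightarrow> z t = b t - integral {0..t} z" and t: "0 \<le> t"
  shows "z t = exp (- t) *\<^sub>R b t + integral {0..t} (\<lambda>u. exp (- (t - u)) *\<^sub>R (b t - b u))"
proof -
  have "((\<lambda>u. exp (- (t - u)) *\<^sub>R b t) has_integral (1 - exp (- t)) *\<^sub>R b t) {0..t}"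
    using has_integral_scaleR_left[OF has_integral_exp_kernel[OF t, of 1]] by simp
  moreover have "(\<lambda>u. exp (- (t - u)) *\<^sub>R b u) integrable_on {0..t}"
    using continuous_on_subset[OF b] by (intro integrable_continuous_interval continuous_intros) auto
  ultimately have kernel: "integral {0..t} (\<lambda>u. exp (- (t - u)) *\<^sub>R (b t - b u))
      = (1 - exp (- t)) *\<^sub>R b t - integral {0..t} (\<lambda>u. exp (- (t - u)) *\<^sub>R b u)"
    by (simp add: scaleR_diff_right integral_diff integral_unique has_integral_integrable)
  have "z t = b t - integral {0..t} (\<lambda>u. exp (- (t - u)) *\<^sub>R b u)"
    using eq[OF t] integral_equation_primitive[OF z b eq t] by simp
  then show ?thesis
    unfolding kernel by (simp add: algebra_simps)
qed

lemma norm_integral_equation_solution_le: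
  fixes z :: "real \<Rightarrow> 'w :: euclidean_space" and b :: "real \<Rightarrow> 'v :: euclidean_space"
  assumes z: "continuous_on {0..} z" and b: "continuous_on {0..} b"
    and L: "linear L" "\<And>x. norm (L x) \<le> K * norm x"
    and eq: "\<And>t. 0 \<le> t \<Longrightarrow> z t = L (b t) - integral {0..t} z" and t: "0 \<le> t"
  shows "norm (z t) \<le> K * (exp (- t) * norm (b t) + integral {0..t} (\<lambda>u. exp (- (t - u)) * norm (b t - b u)))"
proof -
  have Lb: "continuous_on {0..} (\<lambda>t. L (b t))"
    by (rule linear_continuous_on_compose[OF b L(1)])
  have bt: "continuous_on {0..t} b"
    using continuous_on_subset[OF b] by auto
  have integral_le: "norm (integral {0..t} (\<lambda>u. exp (- (t - u)) *\<^sub>R (L (b t) - L (b u))))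
      \<le> integral {0..t} (\<lambda>u. K * (exp (- (t - u)) * norm (b t - b u)))"
  proof (rule integral_norm_bound_integral)
    show "(\<lambda>u. exp (- (t - u)) *\<^sub>R (L (b t) - L (b u))) integrable_on {0..t}"
      using continuous_on_subset[OF Lb] by (intro integrable_continuous_interval continuous_intros) auto
    show "(\<lambda>u. K * (exp (- (t - u)) * norm (b t - b u))) integrable_on {0..t}"
      by (intro integrable_continuous_interval continuous_intros bt)
    show "norm (exp (- (t - u)) *\<^sub>R (L (b t) - L (b u))) \<le> K * (exp (- (t - u)) * norm (b t - b u))" for u
      using mult_left_mono[OF L(2)[of "b t - b u"], of "exp (- (t - u))"]
      by (simp add: linear_diff[OF L(1)] mult_ac)
  qed
  have solution: "z t = exp (- t) *\<^sub>R L (b t)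
      + integral {0..t} (\<lambda>u. exp (- (t - u)) *\<^sub>R (L (b t) - L (b u)))"
    using integral_equation_solution[OF z Lb eq t] by simp
  have "norm (z t) \<le> norm (exp (- t) *\<^sub>R L (b t))
      + norm (integral {0..t} (\<lambda>u. exp (- (t - u)) *\<^sub>R (L (b t) - L (b u))))"
    unfolding solution by (rule norm_triangle_ineq)
  also have "\<dots> \<le> K * (exp (- t) * norm (b t))
      + integral {0..t} (\<lambda>u. K * (exp (- (t - u)) * norm (b t - b u)))"
    using mult_left_mono[OF L(2)[of "b t"], of "exp (- t)"]
    by (intro add_mono integral_le) (simp add: mult_ac)
  finally show ?thesis
    by (simp add: distrib_left)
qed

text \<open>Half of the decay of \<open>exp (- (s - u))\<close> is kept in the integrand, where it compensates
  the growth of the variance \<open>\<bar>s - u\<bar> powr (2 * H)\<close> of \<open>B s - B u\<close>.\<close>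

lemma exp_kernel_1_split:
  "exp_kernel 1 0 s u = exp_kernel (1 / 2) 0 s u * (2 * exp (- \<bar>s - u\<bar> / 2))"
proof (cases "u \<in> {0..s}")
  case True
  then show ?thesis
    by (simp add: exp_kernel_def flip: exp_add) (simp add: field_simps)
qed (simp add: exp_kernel_def)

lemma exp_integral_square_le:
  fixes b :: "real \<Rightarrow> 'v :: euclidean_space"
  assumes b: "continuous_on UNIV b" and s: "0 \<le> s" and a: "0 \<le> a"
  shows "ennreal (a * (integral {0..s} (\<lambda>u. exp (- (s - u)) * norm (b s - b u)))\<^sup>2)
    \<le> (\<integral>\<^sup>+u. ennreal (exp_kernel (1 / 2) 0 s u)
          * ennreal (2 * a * exp (- \<bar>s - u\<bar> / 2) * (norm (b s - b u))\<^sup>2) \<partial>lborel)"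
proof -
  have [measurable]: "b \<in> borel_measurable borel"
    using b by (rule borel_measurable_continuous_onI)
  define X where "X = integral {0..s} (\<lambda>u. exp (- (s - u)) * norm (b s - b u))"
  have X: "((\<lambda>u. exp (- (s - u)) * norm (b s - b u)) has_integral X) {0..s}"
    unfolding X_def using continuous_on_subset[OF b]
    by (intro integrable_integral integrable_continuous_interval continuous_intros) auto
  then have "0 \<le> X"
    by (rule has_integral_nonneg) simp
  have "ennreal X = (\<integral>\<^sup>+u. ennreal (indicator {0..s} u * (exp (- (s - u)) * norm (b s - b u))) \<partial>lborel)"
    by (rule nn_integral_has_integral_lebesgue[symmetric, OF _ X]) simp
  also have "\<dots> = (\<integral>\<^sup>+u. ennreal (exp_kernel 1 0 s u) * ennreal (norm (b s - b u)) \<partial>lborel)"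
    by (intro nn_integral_cong) (simp add: exp_kernel_def mult_ac flip: ennreal_mult)
  finally have "ennreal (X\<^sup>2)
      = (\<integral>\<^sup>+u. ennreal (exp_kernel 1 0 s u) * ennreal (norm (b s - b u)) \<partial>lborel)\<^sup>2"
    using \<open>0 \<le> X\<close> by (metis ennreal_power)
  also have "\<dots> \<le> (\<integral>\<^sup>+u. ennreal (exp_kernel 1 0 s u) * (ennreal (norm (b s - b u)))\<^sup>2 \<partial>lborel)"
  proof (rule nn_integral_weighted_square_le)
    show "(\<lambda>u. ennreal (norm (b s - b u))) \<in> borel_measurable lborel"
      by measurable
  qed (simp_all add: nn_integral_exp_kernel_le_1)
  also have "\<dots> = (\<integral>\<^sup>+u. ennreal (exp_kernel 1 0 s u * (norm (b s - b u))\<^sup>2) \<partial>lborel)"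
    by (simp add: ennreal_power ennreal_mult' exp_kernel_nonneg)
  finally have "ennreal (a * X\<^sup>2)
      \<le> ennreal a * (\<integral>\<^sup>+u. ennreal (exp_kernel 1 0 s u * (norm (b s - b u))\<^sup>2) \<partial>lborel)"
    using a by (simp add: ennreal_mult' mult_left_mono)
  also have "\<dots> = (\<integral>\<^sup>+u. ennreal a * ennreal (exp_kernel 1 0 s u * (norm (b s - b u))\<^sup>2) \<partial>lborel)"
    by (rule nn_integral_cmult[symmetric]) measurable
  also have "\<dots> = (\<integral>\<^sup>+u. ennreal (exp_kernel (1 / 2) 0 s u)
      * ennreal (2 * a * exp (- \<bar>s - u\<bar> / 2) * (norm (b s - b u))\<^sup>2) \<partial>lborel)"
  proof (rule nn_integral_cong)
    fix u
    have "a * (exp_kernel 1 0 s u * (norm (b s - b u))\<^sup>2)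
        = exp_kernel (1 / 2) 0 s u * (2 * a * exp (- \<bar>s - u\<bar> / 2) * (norm (b s - b u))\<^sup>2)"
      by (simp add: exp_kernel_1_split mult_ac)
    then show "ennreal a * ennreal (exp_kernel 1 0 s u * (norm (b s - b u))\<^sup>2)
        = ennreal (exp_kernel (1 / 2) 0 s u) * ennreal (2 * a * exp (- \<bar>s - u\<bar> / 2) * (norm (b s - b u))\<^sup>2)"
      using a by (simp add: exp_kernel_nonneg flip: ennreal_mult')
  qed
  finally show ?thesis
    by (simp add: X_def)
qed

lemma norm_square_le_exp_kernel_terms:
  fixes z b :: "real \<Rightarrow> real ^ 'n" and \<sigma> :: "real ^ 'n ^ 'n"
  assumes z: "continuous_on {0..} z" and b: "continuous_on UNIV b"
    and eq: "\<And>t. 0 \<le> t \<Longrightarrow> z t = \<sigma> *v b t - integral {0..t} z"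
    and K: "0 < K" "\<And>x. norm (\<sigma> *v x) \<le> K * norm x"
    and \<kappa>: "0 < \<kappa>" and a: "0 \<le> a" and s: "s \<in> {0..T}"
  shows "ennreal (\<kappa> * a / (2 * K\<^sup>2) * (exp (- \<kappa> * (T - s)) * (norm (z s))\<^sup>2))
    \<le> ennreal (exp_kernel \<kappa> 0 T s) * ennreal (a * exp (- 2 * s) * (norm (b s))\<^sup>2)
      + ennreal (exp_kernel \<kappa> 0 T s) * (\<integral>\<^sup>+u. ennreal (exp_kernel (1 / 2) 0 s u)
          * ennreal (2 * a * exp (- \<bar>s - u\<bar> / 2) * (norm (b s - b u))\<^sup>2) \<partial>lborel)"
proof -
  define X where "X = integral {0..s} (\<lambda>u. exp (- (s - u)) * norm (b s - b u))"
  have "0 \<le> s"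
    using s by simp
  have "0 \<le> X"
    unfolding X_def using continuous_on_subset[OF b]
    by (intro integral_nonneg integrable_continuous_interval continuous_intros) auto
  moreover have "norm (z s) \<le> K * (exp (- s) * norm (b s) + X)"
    unfolding X_def using continuous_on_subset[OF b, of "{0..}"]
    by (intro norm_integral_equation_solution_le[OF z _ _ K(2) eq \<open>0 \<le> s\<close>]) simp_all
  ultimately have "(norm (z s))\<^sup>2 \<le> (K * (exp (- s) * norm (b s) + X))\<^sup>2"
    by (intro power_mono) simp_all
  also have "\<dots> = K\<^sup>2 * (exp (- s) * norm (b s) + X)\<^sup>2"
    by (simp add: power_mult_distrib)
  also have "\<dots> \<le> K\<^sup>2 * (2 * ((exp (- s) * norm (b s))\<^sup>2 + X\<^sup>2))"
    using sum_squares_bound[of "exp (- s) * norm (b s)" X]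
    by (intro mult_left_mono) (simp_all add: power2_sum)
  also have "(exp (- s) * norm (b s))\<^sup>2 = exp (- 2 * s) * (norm (b s))\<^sup>2"
    by (simp add: power_mult_distrib power2_eq_square flip: exp_add)
  finally have "\<kappa> * a / (2 * K\<^sup>2) * (exp (- \<kappa> * (T - s)) * (norm (z s))\<^sup>2)
      \<le> \<kappa> * a / (2 * K\<^sup>2) * (exp (- \<kappa> * (T - s)) * (K\<^sup>2 * (2 * (exp (- 2 * s) * (norm (b s))\<^sup>2 + X\<^sup>2))))"
    using \<kappa> a by (intro mult_left_mono) simp_all
  also have "\<dots> = exp_kernel \<kappa> 0 T s * (a * exp (- 2 * s) * (norm (b s))\<^sup>2)
      + exp_kernel \<kappa> 0 T s * (a * X\<^sup>2)"
    using s K(1) by (simp add: exp_kernel_def field_simps)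
  also have "ennreal \<dots> = ennreal (exp_kernel \<kappa> 0 T s) * ennreal (a * exp (- 2 * s) * (norm (b s))\<^sup>2)
      + ennreal (exp_kernel \<kappa> 0 T s) * ennreal (a * X\<^sup>2)"
    using \<kappa> a by (simp add: exp_kernel_nonneg flip: ennreal_plus ennreal_mult')
  also have "\<dots> \<le> ennreal (exp_kernel \<kappa> 0 T s) * ennreal (a * exp (- 2 * s) * (norm (b s))\<^sup>2)
      + ennreal (exp_kernel \<kappa> 0 T s) * (\<integral>\<^sup>+u. ennreal (exp_kernel (1 / 2) 0 s u)
          * ennreal (2 * a * exp (- \<bar>s - u\<bar> / 2) * (norm (b s - b u))\<^sup>2) \<partial>lborel)"
    unfolding X_def by (intro add_left_mono mult_left_mono exp_integral_square_le[OF b \<open>0 \<le> s\<close> a]) simp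
  finally show ?thesis
    by (simp add: ennreal_leI)
qed

lemma N_norm_square_le_exp_kernel_integrals:
  fixes z b :: "real \<Rightarrow> real ^ 'n" and \<sigma> :: "real ^ 'n ^ 'n"
  assumes z: "continuous_on {0..} z" and b: "continuous_on UNIV b"
    and eq: "\<And>t. 0 \<le> t \<Longrightarrow> z t = \<sigma> *v b t - integral {0..t} z"
    and K: "0 < K" "\<And>x. norm (\<sigma> *v x) \<le> K * norm x"
    and T: "0 \<le> T" and \<kappa>: "0 < \<kappa>" and a: "0 \<le> a"
  shows "ennreal (\<kappa> * a / (2 * K\<^sup>2) * (N_norm \<kappa> T z)\<^sup>2)
    \<le> (\<integral>\<^sup>+s. ennreal (exp_kernel \<kappa> 0 T s) * ennreal (a * exp (- 2 * s) * (norm (b s))\<^sup>2) \<partial>lborel)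
      + (\<integral>\<^sup>+s. ennreal (exp_kernel \<kappa> 0 T s) * (\<integral>\<^sup>+u. ennreal (exp_kernel (1 / 2) 0 s u)
          * ennreal (2 * a * exp (- \<bar>s - u\<bar> / 2) * (norm (b s - b u))\<^sup>2) \<partial>lborel) \<partial>lborel)"
    (is "_ \<le> (\<integral>\<^sup>+s. ?F1 s \<partial>lborel) + (\<integral>\<^sup>+s. ?F2 s \<partial>lborel)")
proof -
  have [measurable]: "b \<in> borel_measurable borel"
    using b by (rule borel_measurable_continuous_onI)
  define w where "w = (\<lambda>s. exp (- \<kappa> * (T - s)) * (norm (z s))\<^sup>2)"
  have "(w has_integral integral {0..T} w) {0..T}"
    unfolding w_def using continuous_on_subset[OF z, of "{0..T}"]
    by (intro integrable_integral integrable_continuous_interval continuous_intros) auto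
  moreover from this have "0 \<le> integral {0..T} w"
    by (rule has_integral_nonneg) (simp add: w_def)
  ultimately have "(w has_integral (N_norm \<kappa> T z)\<^sup>2) {0..T}"
    by (simp add: N_norm_def w_def)
  then have "ennreal (\<kappa> * a / (2 * K\<^sup>2) * (N_norm \<kappa> T z)\<^sup>2)
      = (\<integral>\<^sup>+s. ennreal (indicator {0..T} s * (\<kappa> * a / (2 * K\<^sup>2) * w s)) \<partial>lborel)"
    using \<kappa> a by (intro nn_integral_has_integral_lebesgue[symmetric] has_integral_mult_right)
      (simp_all add: w_def)
  also have "\<dots> \<le> (\<integral>\<^sup>+s. ?F1 s + ?F2 s \<partial>lborel)"
    unfolding w_def using norm_square_le_exp_kernel_terms[OF z b eq K \<kappa> a]
    by (intro nn_integral_mono) (simp split: split_indicator)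
  also have "\<dots> = (\<integral>\<^sup>+s. ?F1 s \<partial>lborel) + (\<integral>\<^sup>+s. ?F2 s \<partial>lborel)"
    by (rule nn_integral_add) measurable
  finally show ?thesis .
qed

lemma fbm_exp_kernel_moment_le:
  fixes B :: "real \<Rightarrow> 'a \<Rightarrow> real ^ 'n" and a \<kappa> T :: real
  assumes fbm: "is_fbm M H B" and H: "0 < H" "H < 1" and a: "0 \<le> a" "32 * CARD('n) * a \<le> 1"
    and \<kappa>: "0 < \<kappa>"
  shows "(\<integral>\<^sup>+\<omega>. ennexp (\<integral>\<^sup>+s. ennreal (exp_kernel \<kappa> 0 T s)
      * ennreal (a * exp (- 2 * s) * (norm (B (max 0 s) \<omega>))\<^sup>2) \<partial>lborel) \<partial>M)
    \<le> ennreal (exp 1) + ennreal (2 * CARD('n))"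
proof (rule nn_integral_ennexp_nn_integral_le[OF is_fbmD(1)[OF fbm] sigma_finite_lborel])
  note [measurable (raw)] = is_fbm_measurable_compose[OF fbm]
  show "(\<lambda>p. ennreal (a * exp (- 2 * fst p) * (norm (B (max 0 (fst p)) (snd p)))\<^sup>2))
      \<in> borel_measurable (lborel \<Otimes>\<^sub>M M)"
    by measurable
  show "(\<integral>\<^sup>+s. ennreal (exp_kernel \<kappa> 0 T s) \<partial>lborel) \<le> 1"
    using \<kappa> by (simp add: nn_integral_exp_kernel_le_1)
  show "(\<integral>\<^sup>+\<omega>. ennexp (ennreal (a * exp (- 2 * s) * (norm (B (max 0 s) \<omega>))\<^sup>2)) \<partial>M)
      \<le> ennreal (2 * CARD('n))" for s
    by (rule fbm_nn_integral_exp_square_le[OF fbm H a])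
qed simp

lemma fbm_increment_exp_kernel_moment_le:
  fixes B :: "real \<Rightarrow> 'a \<Rightarrow> real ^ 'n" and a \<kappa> T :: real
  assumes fbm: "is_fbm M H B" and H: "0 < H" "H < 1" and a: "0 \<le> a" "32 * CARD('n) * a \<le> 1"
    and \<kappa>: "0 < \<kappa>"
  shows "(\<integral>\<^sup>+\<omega>. ennexp (\<integral>\<^sup>+s. ennreal (exp_kernel \<kappa> 0 T s) * (\<integral>\<^sup>+u. ennreal (exp_kernel (1 / 2) 0 s u)
      * ennreal (a * exp (- \<bar>s - u\<bar> / 2) * (norm (B (max 0 s) \<omega> - B (max 0 u) \<omega>))\<^sup>2) \<partial>lborel) \<partial>lborel) \<partial>M)
    \<le> ennreal (exp 1) + (ennreal (exp 1) + ennreal (2 * CARD('n)))"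
proof (rule nn_integral_ennexp_nn_integral_le[OF is_fbmD(1)[OF fbm] sigma_finite_lborel])
  note [measurable (raw)] = is_fbm_measurable_compose[OF fbm]
  show "(\<lambda>p. \<integral>\<^sup>+u. ennreal (exp_kernel (1 / 2) 0 (fst p) u) * ennreal (a * exp (- \<bar>fst p - u\<bar> / 2)
      * (norm (B (max 0 (fst p)) (snd p) - B (max 0 u) (snd p)))\<^sup>2) \<partial>lborel)
      \<in> borel_measurable (lborel \<Otimes>\<^sub>M M)"
    by measurable
  show "(\<integral>\<^sup>+s. ennreal (exp_kernel \<kappa> 0 T s) \<partial>lborel) \<le> 1"
    using \<kappa> by (simp add: nn_integral_exp_kernel_le_1)
  show "(\<integral>\<^sup>+\<omega>. ennexp (\<integral>\<^sup>+u. ennreal (exp_kernel (1 / 2) 0 s u) * ennreal (a * exp (- \<bar>s - u\<bar> / 2)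
      * (norm (B (max 0 s) \<omega> - B (max 0 u) \<omega>))\<^sup>2) \<partial>lborel) \<partial>M)
      \<le> ennreal (exp 1) + ennreal (2 * CARD('n))" for s
  proof (rule nn_integral_ennexp_nn_integral_le[OF is_fbmD(1)[OF fbm] sigma_finite_lborel])
    show "(\<lambda>p. ennreal (a * exp (- \<bar>s - fst p\<bar> / 2)
        * (norm (B (max 0 s) (snd p) - B (max 0 (fst p)) (snd p)))\<^sup>2)) \<in> borel_measurable (lborel \<Otimes>\<^sub>M M)"
      by measurable
    show "(\<integral>\<^sup>+u. ennreal (exp_kernel (1 / 2) 0 s u) \<partial>lborel) \<le> 1"
      by (simp add: nn_integral_exp_kernel_le_1)
    show "(\<integral>\<^sup>+\<omega>. ennexp (ennreal (a * exp (- \<bar>s - u\<bar> / 2)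
        * (norm (B (max 0 s) \<omega> - B (max 0 u) \<omega>))\<^sup>2)) \<partial>M) \<le> ennreal (2 * CARD('n))" for u
      by (rule fbm_increment_nn_integral_exp_square_le[OF fbm H a])
  qed simp
qed simp

lemma fbm_ou_exp_square_dominated:
  fixes B Z :: "real \<Rightarrow> 'a \<Rightarrow> real ^ 'n" and \<sigma> :: "real ^ 'n ^ 'n" and K T \<kappa> :: real
  assumes H: "0 < H" "H < 1" and fbm: "is_fbm M H B"
    and Z: "\<forall>\<omega>\<in>space M. continuous_on {0..} (\<lambda>t. Z t \<omega>)"
    and eq: "\<forall>\<omega>\<in>space M. \<forall>t\<ge>0. Z t \<omega> = \<sigma> *v B t \<omega> - integral {0..t} (\<lambda>s. Z s \<omega>)"
    and K: "0 < K" "\<And>x. norm (\<sigma> *v x) \<le> K * norm x" and T: "0 \<le> T" and \<kappa>: "0 < \<kappa>"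
  shows "\<exists>Y\<in>borel_measurable M. (\<integral>\<^sup>+\<omega>. Y \<omega> \<partial>M) \<le> ennreal (3 * exp 1 + 4 * CARD('n))
    \<and> (\<forall>\<omega>\<in>space M.
        ennreal (exp (\<kappa> / (256 * CARD('n) * K\<^sup>2) * (N_norm \<kappa> T (\<lambda>s. Z s \<omega>))\<^sup>2)) \<le> Y \<omega>)"
proof -
  note [measurable (raw)] = is_fbm_measurable_compose[OF fbm]
  define a where "a = 1 / (64 * CARD('n))"
  define HA where "HA = (\<lambda>\<omega>. \<integral>\<^sup>+s. ennreal (exp_kernel \<kappa> 0 T s)
    * ennreal (a * exp (- 2 * s) * (norm (B (max 0 s) \<omega>))\<^sup>2) \<partial>lborel)"
  define HB where "HB = (\<lambda>\<omega>. \<integral>\<^sup>+s. ennreal (exp_kernel \<kappa> 0 T s) * (\<integral>\<^sup>+u. ennreal (exp_kernel (1 / 2) 0 s u)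
    * ennreal (2 * a * exp (- \<bar>s - u\<bar> / 2) * (norm (B (max 0 s) \<omega> - B (max 0 u) \<omega>))\<^sup>2) \<partial>lborel) \<partial>lborel)"
  have "(\<integral>\<^sup>+\<omega>. ennexp (HA \<omega>) + ennexp (HB \<omega>) \<partial>M)
      = (\<integral>\<^sup>+\<omega>. ennexp (HA \<omega>) \<partial>M) + (\<integral>\<^sup>+\<omega>. ennexp (HB \<omega>) \<partial>M)"
    unfolding HA_def HB_def by (rule nn_integral_add) measurable
  also have "\<dots> \<le> (ennreal (exp 1) + ennreal (2 * CARD('n)))
      + (ennreal (exp 1) + (ennreal (exp 1) + ennreal (2 * CARD('n))))"
    unfolding HA_def HB_def using \<kappa>
    by (intro add_mono fbm_exp_kernel_moment_le[OF fbm H] fbm_increment_exp_kernel_moment_le[OF fbm H])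
      (simp_all add: a_def)
  also have "\<dots> = ennreal (3 * exp 1 + 4 * CARD('n))"
    by (simp flip: ennreal_plus)
  finally have "(\<integral>\<^sup>+\<omega>. ennexp (HA \<omega>) + ennexp (HB \<omega>) \<partial>M) \<le> ennreal (3 * exp 1 + 4 * CARD('n))" .
  moreover have "ennreal (exp (\<kappa> / (256 * CARD('n) * K\<^sup>2) * (N_norm \<kappa> T (\<lambda>s. Z s \<omega>))\<^sup>2))
      \<le> ennexp (HA \<omega>) + ennexp (HB \<omega>)" if \<omega>: "\<omega> \<in> space M" for \<omega>
  proof -
    have "ennreal (\<kappa> * a / (2 * K\<^sup>2) * (N_norm \<kappa> T (\<lambda>s. Z s \<omega>))\<^sup>2) \<le> HA \<omega> + HB \<omega>"
      unfolding HA_def HB_def using Z eq \<omega> \<kappa> is_fbm_continuous_on_max[OF fbm \<omega>]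
      by (intro N_norm_square_le_exp_kernel_integrals[OF _ _ _ K T \<kappa>]) (auto simp: a_def)
    moreover have "\<kappa> * a / (2 * K\<^sup>2) * (N_norm \<kappa> T (\<lambda>s. Z s \<omega>))\<^sup>2
        = 2 * (\<kappa> / (256 * CARD('n) * K\<^sup>2) * (N_norm \<kappa> T (\<lambda>s. Z s \<omega>))\<^sup>2)"
      using K(1) by (simp add: a_def field_simps)
    ultimately have "ennexp (ennreal (\<kappa> / (256 * CARD('n) * K\<^sup>2) * (N_norm \<kappa> T (\<lambda>s. Z s \<omega>))\<^sup>2))
        \<le> ennexp (HA \<omega>) + ennexp (HB \<omega>)"
      by (intro ennexp_le_add) (metis ennreal_mult' ennreal_numeral zero_le_numeral)
    then show ?thesis
      using \<kappa> by simp
  qed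
  moreover have "(\<lambda>\<omega>. ennexp (HA \<omega>) + ennexp (HB \<omega>)) \<in> borel_measurable M"
    unfolding HA_def HB_def by measurable
  ultimately show ?thesis
    by blast
qed

lemma fbm_ou_N_norm_tail_le:
  fixes B Z :: "real \<Rightarrow> 'a \<Rightarrow> real ^ 'n" and \<sigma> :: "real ^ 'n ^ 'n" and K T \<kappa> :: real
  assumes H: "0 < H" "H < 1" and fbm: "is_fbm M H B"
    and Z: "\<forall>\<omega>\<in>space M. continuous_on {0..} (\<lambda>t. Z t \<omega>)"
    and eq: "\<forall>\<omega>\<in>space M. \<forall>t\<ge>0. Z t \<omega> = \<sigma> *v B t \<omega> - integral {0..t} (\<lambda>s. Z s \<omega>)"
    and K: "0 < K" "\<And>x. norm (\<sigma> *v x) \<le> K * norm x" and T: "0 \<le> T" and \<kappa>: "0 < \<kappa>"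
  shows "measure M {\<omega> \<in> space M. N_norm \<kappa> T (\<lambda>s. Z s \<omega>) > norm z}
    \<le> (3 * exp 1 + 4 * CARD('n)) * exp (- (\<kappa> / (256 * CARD('n) * K\<^sup>2)) * (norm z)\<^sup>2)"
proof -
  define c where "c = \<kappa> / (256 * CARD('n) * K\<^sup>2)"
  obtain Y where Y: "Y \<in> borel_measurable M" "(\<integral>\<^sup>+\<omega>. Y \<omega> \<partial>M) \<le> ennreal (3 * exp 1 + 4 * CARD('n))"
    "\<And>\<omega>. \<omega> \<in> space M \<Longrightarrow> ennreal (exp (c * (N_norm \<kappa> T (\<lambda>s. Z s \<omega>))\<^sup>2)) \<le> Y \<omega>"
    using fbm_ou_exp_square_dominated[OF assms] unfolding c_def by blast
  have "0 < c"
    using \<kappa> K(1) by (simp add: c_def)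
  have "ennreal (exp (c * (norm z)\<^sup>2)) \<le> Y \<omega>"
    if \<omega>: "\<omega> \<in> {\<omega> \<in> space M. N_norm \<kappa> T (\<lambda>s. Z s \<omega>) > norm z}" for \<omega>
  proof -
    from \<omega> have "(norm z)\<^sup>2 \<le> (N_norm \<kappa> T (\<lambda>s. Z s \<omega>))\<^sup>2"
      by (intro power_mono) auto
    with \<open>0 < c\<close> have "ennreal (exp (c * (norm z)\<^sup>2)) \<le> ennreal (exp (c * (N_norm \<kappa> T (\<lambda>s. Z s \<omega>))\<^sup>2))"
      by (intro ennreal_leI) simp
    also have "\<dots> \<le> Y \<omega>"
      using \<omega> Y(3) by simp
    finally show ?thesis .
  qed
  then have "measure M {\<omega> \<in> space M. N_norm \<kappa> T (\<lambda>s. Z s \<omega>) > norm z}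
      \<le> (3 * exp 1 + 4 * CARD('n)) / exp (c * (norm z)\<^sup>2)"
    using Y(1,2) prob_space.finite_measure[OF is_fbmD(1)[OF fbm]]
    by (intro nn_integral_Markov_inequality_measure) auto
  also have "\<dots> = (3 * exp 1 + 4 * CARD('n)) * exp (- c * (norm z)\<^sup>2)"
    by (simp only: mult_minus_left exp_minus divide_inverse)
  finally show ?thesis
    unfolding c_def .
qed

theorem lemma2p6:
  fixes M :: "'a measure" and H :: real and \<sigma> :: "real ^ 'n ^ 'n"
    and B Z :: "real \<Rightarrow> 'a \<Rightarrow> real ^ 'n"
  assumes "0 < H" and "H < 1"
    and "is_fbm M H B"
    and "\<forall>\<omega>\<in>space M. continuous_on {0..} (\<lambda>t. Z t \<omega>)"
    and "\<forall>\<omega>\<in>space M. \<forall>t\<ge>0. Z t \<omega> = \<sigma> *v B t \<omega> - integral {0..t} (\<lambda>s. Z s \<omega>)"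
  shows "\<forall>\<kappa>>0. \<exists>c>0. \<exists>C>0. \<forall>z::real ^ 'n. \<forall>T\<ge>0.
           measure M {\<omega> \<in> space M. N_norm \<kappa> T (\<lambda>s. Z s \<omega>) > norm z} \<le> C * exp (- c * (norm z)\<^sup>2)"
proof (intro allI impI)
  fix \<kappa> :: real
  assume "0 < \<kappa>"
  obtain K where K: "0 < K" "\<And>x. norm (\<sigma> *v x) \<le> K * norm x"
    using bounded_linear.pos_bounded[OF matrix_vector_mul_bounded_linear[of \<sigma>]]
    by (auto simp: mult.commute)
  show "\<exists>c>0. \<exists>C>0. \<forall>z::real ^ 'n. \<forall>T\<ge>0.
      measure M {\<omega> \<in> space M. N_norm \<kappa> T (\<lambda>s. Z s \<omega>) > norm z} \<le> C * exp (- c * (norm z)\<^sup>2)"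
  proof (intro exI conjI allI impI)
    show "0 < \<kappa> / (256 * CARD('n) * K\<^sup>2)"
      using \<open>0 < \<kappa>\<close> K(1) by simp
    show "0 < 3 * exp 1 + 4 * CARD('n)"
      by (simp add: add_pos_pos)
    show "measure M {\<omega> \<in> space M. N_norm \<kappa> T (\<lambda>s. Z s \<omega>) > norm z}
        \<le> (3 * exp 1 + 4 * CARD('n)) * exp (- (\<kappa> / (256 * CARD('n) * K\<^sup>2)) * (norm z)\<^sup>2)"
      if "0 \<le> T" for z :: "real ^ 'n" and T
      by (rule fbm_ou_N_norm_tail_le[OF assms K that \<open>0 < \<kappa>\<close>])
  qed
qed

end
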